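(* Let $n\ge 2$ and let $P_n(x_0)$ be a $\Pi^0_{2n-3}$-predicate on $\mathbb N_+$. Then for each $2\le i<n$ there is a $\Pi^0_{2i-3}$-predicate $P_i(x_0,x_1,y_1,x_2,y_2,\dots,x_{n-i},y_{n-i})$ on $\mathbb N_+$ such that, for every $2\le i<n$, writing $\overline x=(x_0,x_1,y_1,\dots,x_{n-i-1},y_{n-i-1})$ and letting all quantifiers range over $\mathbb N_+$: (i) $P_{i+1}(\overline x)$ is logically equivalent to $\forall x_{n-i}\,\exists y_{n-i}: P_i(\overline x,x_{n-i},y_{n-i})$; (ii) if $\forall y_{n-i}:\neg P_i(\overline x,x_{n-i},y_{n-i})$, then $\forall x'_{n-i}\ge x_{n-i}\ \forall y_{n-i}:\neg P_i(\overline x,x'_{n-i},y_{n-i})$.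
   Context: $\mathbb N_+=\{1,2,\dots\}$. $\Pi^0_m$ denotes the $m$-th universal level of the arithmetical hierarchy. *)

theory Defs
  imports Main
begin

primrec pr_rec :: "(nat list \<Rightarrow> nat) \<Rightarrow> (nat list \<Rightarrow> nat) \<Rightarrow> nat \<Rightarrow> nat list \<Rightarrow> nat" where
  "pr_rec g h 0 xs = g xs"
| "pr_rec g h (Suc k) xs = h (k # pr_rec g h k xs # xs)"

inductive primrec_fn :: "nat \<Rightarrow> (nat list \<Rightarrow> nat) \<Rightarrow> bool" where
  pr_zero: "primrec_fn n (\<lambda>_. 0)"
| pr_succ: "primrec_fn 1 (\<lambda>xs. Suc (hd xs))"
| pr_proj: "i < n \<Longrightarrow> primrec_fn n (\<lambda>xs. xs ! i)"
| pr_comp: "primrec_fn m g \<Longrightarrow> length fs = m \<Longrightarrow> (\<forall>f\<in>set fs. primrec_fn n f)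
            \<Longrightarrow> primrec_fn n (\<lambda>xs. g (map (\<lambda>f. f xs) fs))"
| pr_rec: "primrec_fn n g \<Longrightarrow> primrec_fn (Suc (Suc n)) h
            \<Longrightarrow> primrec_fn (Suc n) (\<lambda>ys. pr_rec g h (hd ys) (tl ys))"

definition primrec_pred :: "nat \<Rightarrow> (nat list \<Rightarrow> bool) \<Rightarrow> bool" where
  "primrec_pred k P \<longleftrightarrow> (\<exists>f. primrec_fn k f \<and> (\<forall>xs. length xs = k \<longrightarrow> (P xs \<longleftrightarrow> f xs \<noteq> 0)))"

text \<open>Arithmetical hierarchy (Kleene normal form): flag True = Sigma, False = Pi.
  Level 0 = (primitive) recursive relations.\<close>
fun arith :: "bool \<Rightarrow> nat \<Rightarrow> nat \<Rightarrow> (nat list \<Rightarrow> bool) \<Rightarrow> bool" where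
  "arith b 0 k P = primrec_pred k P"
| "arith True (Suc m) k P = (\<exists>Q. arith False m (Suc k) Q \<and>
      (\<forall>xs. length xs = k \<longrightarrow> (P xs \<longleftrightarrow> (\<exists>y. Q (xs @ [y])))))"
| "arith False (Suc m) k P = (\<exists>Q. arith True m (Suc k) Q \<and>
      (\<forall>xs. length xs = k \<longrightarrow> (P xs \<longleftrightarrow> (\<forall>y. Q (xs @ [y])))))"

abbreviation Pi0 :: "nat \<Rightarrow> nat \<Rightarrow> (nat list \<Rightarrow> bool) \<Rightarrow> bool" where
  "Pi0 m k P \<equiv> arith False m k P"

definition pos_list :: "nat list \<Rightarrow> bool" where
  "pos_list xs \<longleftrightarrow> (\<forall>x\<in>set xs. 0 < x)"

definition Pi0_pos :: "nat \<Rightarrow> nat \<Rightarrow> (nat list \<Rightarrow> bool) \<Rightarrow> bool" where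
  "Pi0_pos m k P \<longleftrightarrow> (\<exists>Q. Pi0 m k Q \<and> (\<forall>xs. length xs = k \<and> pos_list xs \<longrightarrow> (P xs \<longleftrightarrow> Q xs)))"

end

theory Submission
  imports Defs
begin

text \<open>A \<open>\<Pi>\<^sup>0\<^sub>m\<^sub>+\<^sub>2\<close> predicate has the form \<open>\<forall>a \<exists>b. R(x\<^sub>1, \<dots>, a, b)\<close> with \<open>R\<close> in \<open>\<Pi>\<^sup>0\<^sub>m\<close>.
  By finite choice, \<open>\<forall>a \<exists>b. R\<close> is equivalent to \<open>\<forall>x \<exists>y. R'(x, y)\<close> where
  \<open>R'(x, y) = (\<forall>a<x \<exists>b<y. R(a, b))\<close>, and \<open>R'\<close> is antitone in \<open>x\<close>.
  The crux is that \<open>R'\<close> is still \<open>\<Pi>\<^sup>0\<^sub>m\<close>: every level of the arithmetical hierarchy is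
  closed under bounded quantification, because the collection principle
  \<open>(\<forall>a<x \<exists>c. S) \<longleftrightarrow> (\<exists>w \<forall>a<x \<exists>c<w. S)\<close> moves a bounded quantifier inside an
  unbounded one, and primitive recursive relations are closed under it.
  Starting from \<open>P\<^sub>n\<close> and repeating this step, each time lowering the level by two, yields
  \<open>P\<^sub>n\<^sub>-\<^sub>1, \<dots>, P\<^sub>2\<close>.\<close>

lemma primrec_fn_map_nth:
  assumes "primrec_fn m g" "length js = m" "\<forall>i\<in>set js. i < n"
  shows "primrec_fn n (\<lambda>xs. g (map ((!) xs) js))"
proof -
  have "primrec_fn n (\<lambda>xs. g (map (\<lambda>f. f xs) (map (\<lambda>i xs. xs ! i) js)))"
    by (rule pr_comp[OF assms(1)]) (use assms in \<open>auto intro: pr_proj\<close>)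
  then show ?thesis by (simp add: comp_def)
qed

lemma primrec_fn_const: "primrec_fn n (\<lambda>_. c)"
proof (induction c)
  case 0
  show ?case by (rule pr_zero)
next
  case (Suc c)
  have "primrec_fn n (\<lambda>xs. (\<lambda>ys. Suc (hd ys)) (map (\<lambda>f. f xs) [\<lambda>_. c]))"
    by (rule pr_comp[OF pr_succ]) (use Suc in auto)
  then show ?case by simp
qed

lemma primrec_fn_if_zero:
  assumes "primrec_fn n f" "primrec_fn n g"
  shows "primrec_fn n (\<lambda>xs. if f xs = 0 then 0 else g xs)"
proof -
  have "primrec_fn (Suc (Suc 0)) (\<lambda>ys. pr_rec (\<lambda>_. 0) (\<lambda>zs. zs ! 2) (hd ys) (tl ys))"
    by (rule primrec_fn.pr_rec) (auto intro: pr_zero pr_proj)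
  then have "primrec_fn n (\<lambda>xs. (\<lambda>ys. pr_rec (\<lambda>_. 0) (\<lambda>zs. zs ! 2) (hd ys) (tl ys)) (map (\<lambda>h. h xs) [f, g]))"
    by (rule pr_comp) (use assms in auto)
  moreover have "pr_rec (\<lambda>_. 0) (\<lambda>zs. zs ! 2) u [v] = (if u = 0 then 0 else v)" for u v
    by (cases u) auto
  ultimately show ?thesis by simp
qed

lemma primrec_fn_is_zero:
  assumes "primrec_fn n f"
  shows "primrec_fn n (\<lambda>xs. if f xs = 0 then 1 else 0)"
proof -
  have "primrec_fn (Suc 0) (\<lambda>ys. pr_rec (\<lambda>_. 1) (\<lambda>_. 0) (hd ys) (tl ys))"
    by (rule primrec_fn.pr_rec) (auto intro: pr_zero primrec_fn_const)
  then have "primrec_fn n (\<lambda>xs. (\<lambda>ys. pr_rec (\<lambda>_. 1) (\<lambda>_. 0) (hd ys) (tl ys)) (map (\<lambda>h. h xs) [f]))"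
    by (rule pr_comp) (use assms in auto)
  moreover have "pr_rec (\<lambda>_. 1) (\<lambda>_. 0) u [] = (if u = 0 then 1 else 0)" for u
    by (cases u) auto
  ultimately show ?thesis by simp
qed

lemma primrec_pred_Not:
  assumes "primrec_pred k P"
  shows "primrec_pred k (\<lambda>xs. \<not> P xs)"
proof -
  obtain f where "primrec_fn k f" "\<forall>xs. length xs = k \<longrightarrow> (P xs \<longleftrightarrow> f xs \<noteq> 0)"
    using assms unfolding primrec_pred_def by blast
  then show ?thesis unfolding primrec_pred_def
    by (intro exI[of _ "\<lambda>xs. if f xs = 0 then 1 else 0"]) (simp add: primrec_fn_is_zero)
qed

lemma primrec_pred_ball:
  assumes T: "primrec_pred k T" and js: "length js = k" "\<forall>i\<in>set js. i \<le> j" and p: "p < j"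
  shows "primrec_pred j (\<lambda>xs. \<forall>a<xs ! p. T (map ((!) (xs @ [a])) js))"
proof -
  obtain f where f: "primrec_fn k f" "\<forall>xs. length xs = k \<longrightarrow> (T xs \<longleftrightarrow> f xs \<noteq> 0)"
    using T unfolding primrec_pred_def by blast
  \<comment> \<open>The recursion step sees the list \<open>a # acc # xs\<close>; \<open>idx\<close> relocates the arguments of \<open>T\<close>.\<close>
  define idx where "idx = map (\<lambda>i. if i = j then 0 else Suc (Suc i)) js"
  define h where "h = (\<lambda>ws. if ws ! 1 = 0 then 0 else f (map ((!) ws) idx))"
  have h: "primrec_fn (Suc (Suc j)) h"
    unfolding h_def using js
    by (intro primrec_fn_if_zero pr_proj primrec_fn_map_nth[OF f(1)]) (auto simp: idx_def)
  define G where "G = (\<lambda>ys. pr_rec (\<lambda>_. 1) h (hd ys) (tl ys))"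
  have "primrec_fn (Suc j) G"
    unfolding G_def by (rule primrec_fn.pr_rec[OF primrec_fn_const h])
  then have F: "primrec_fn j (\<lambda>xs. G (map ((!) xs) (p # [0..<j])))"
    by (rule primrec_fn_map_nth) (use p in auto)
  have G: "G (x # xs) \<noteq> 0 \<longleftrightarrow> (\<forall>a<x. T (map ((!) (xs @ [a])) js))" if "length xs = j" for x xs
  proof (induction x)
    case 0
    show ?case by (simp add: G_def)
  next
    case (Suc x)
    have "map ((!) (x # pr_rec (\<lambda>_. 1) h x xs # xs)) idx = map ((!) (xs @ [x])) js"
      using that js(2) by (auto simp: idx_def nth_append)
    then show ?case using Suc f(2) js(1) by (auto simp: G_def h_def less_Suc_eq)
  qed
  have "map ((!) xs) (p # [0..<j]) = xs ! p # xs" if "length xs = j" for xs :: "nat list"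
    using map_nth[of xs] that by simp
  with G F show ?thesis
    unfolding primrec_pred_def by (intro exI[of _ "\<lambda>xs. G (map ((!) xs) (p # [0..<j]))"]) auto
qed

lemma arith_cong:
  assumes "arith b m k P" "\<And>xs. length xs = k \<Longrightarrow> P xs \<longleftrightarrow> P' xs"
  shows "arith b m k P'"
proof (cases m)
  case 0
  have "primrec_pred k P" using assms(1) 0 by (cases b) auto
  then have "primrec_pred k P'" using assms(2) unfolding primrec_pred_def by metis
  then show ?thesis using 0 by (cases b) auto
next
  case (Suc m')
  then show ?thesis using assms by (cases b) auto
qed

lemma arith_Not: "arith b m k P \<Longrightarrow> arith (\<not> b) m k (\<lambda>xs. \<not> P xs)"
proof (induction m arbitrary: b k P)
  case 0
  then show ?case by (cases b) (auto intro: primrec_pred_Not)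
next
  case (Suc m)
  then obtain Q where "arith (\<not> b) m (Suc k) Q"
      "\<forall>xs. length xs = k \<longrightarrow> (P xs \<longleftrightarrow> (if b then \<exists>y. Q (xs @ [y]) else \<forall>y. Q (xs @ [y])))"
    by (cases b) auto
  with Suc.IH have "arith b m (Suc k) (\<lambda>xs. \<not> Q xs)"
    by force
  with \<open>\<forall>xs. _\<close> show ?case
    by (cases b) (auto intro!: exI[of _ "\<lambda>xs. \<not> Q xs"])
qed

lemma bounded_choice_nat:
  fixes S :: "nat \<Rightarrow> nat \<Rightarrow> bool"
  shows "(\<forall>a<x. \<exists>c. S a c) \<longleftrightarrow> (\<exists>w. \<forall>a<x. \<exists>c<w. S a c)"
proof
  assume "\<forall>a<x. \<exists>c. S a c"
  then obtain f where f: "\<forall>a<x. S a (f a)" by metis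
  have "\<forall>a<x. f a < Suc (\<Sum>a'<x. f a')"
    by (auto intro: le_imp_less_Suc member_le_sum)
  with f show "\<exists>w. \<forall>a<x. \<exists>c<w. S a c" by blast
qed blast

text \<open>The bound variable \<open>a\<close> is the \<open>j\<close>-th entry of \<open>xs @ [a]\<close>, so \<open>js\<close> performs an
  arbitrary substitution of variables together with the bounded quantification; this
  generality is what makes the induction over levels go through.\<close>

definition bounded_forall_closed :: "bool \<Rightarrow> nat \<Rightarrow> bool" where
  "bounded_forall_closed b m \<longleftrightarrow> (\<forall>k T js j p. arith b m k T \<longrightarrow> length js = k \<longrightarrow>
     (\<forall>i\<in>set js. i \<le> j) \<longrightarrow> p < j \<longrightarrow> arith b m j (\<lambda>xs. \<forall>a<xs ! p. T (map ((!) (xs @ [a])) js)))"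

lemma bounded_forall_closedD:
  "bounded_forall_closed b m \<Longrightarrow> arith b m k T \<Longrightarrow> length js = k \<Longrightarrow> \<forall>i\<in>set js. i \<le> j \<Longrightarrow> p < j \<Longrightarrow>
   arith b m j (\<lambda>xs. \<forall>a<xs ! p. T (map ((!) (xs @ [a])) js))"
  unfolding bounded_forall_closed_def by blast

lemma bounded_forall_closed_0: "bounded_forall_closed b 0"
  unfolding bounded_forall_closed_def by (cases b) (auto intro: primrec_pred_ball)

lemma map_nth_shift:
  assumes "length xs = j" "\<forall>i\<in>set js. i \<le> j"
  shows "map ((!) (xs @ [c, a] @ ys)) (map (\<lambda>i. if i = j then Suc j else i) js) = map ((!) (xs @ [a])) js"
  using assms by (auto simp: nth_append)

lemma bounded_forall_closed_Pi:
  assumes "bounded_forall_closed True m"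
  shows "bounded_forall_closed False (Suc m)"
  unfolding bounded_forall_closed_def
proof (intro allI impI)
  fix k j p :: nat and T js
  assume T: "Pi0 (Suc m) k T" and js: "length js = k" "\<forall>i\<in>set js. i \<le> j" and p: "p < j"
  then obtain S where S: "arith True m (Suc k) S" "\<forall>zs. length zs = k \<longrightarrow> (T zs \<longleftrightarrow> (\<forall>c. S (zs @ [c])))"
    by auto
  define shift where "shift = map (\<lambda>i. if i = j then Suc j else i) js"
  define W where "W = (\<lambda>ys. \<forall>a<ys ! p. S (map ((!) (ys @ [a])) (shift @ [j])))"
  have "arith True m (Suc j) W"
    unfolding W_def by (rule bounded_forall_closedD[OF assms S(1)]) (use js p in \<open>auto simp: shift_def\<close>)
  moreover have "(\<forall>a<xs ! p. T (map ((!) (xs @ [a])) js)) \<longleftrightarrow> (\<forall>c. W (xs @ [c]))"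
    if "length xs = j" for xs
    using that S(2) map_nth_shift[OF that js(2), of _ _ "[]", folded shift_def] p js(1)
    by (auto simp: W_def nth_append)
  ultimately show "Pi0 (Suc m) j (\<lambda>xs. \<forall>a<xs ! p. T (map ((!) (xs @ [a])) js))"
    by auto
qed

lemma bounded_forall_closed_Sigma:
  assumes "bounded_forall_closed True m" "bounded_forall_closed False m"
  shows "bounded_forall_closed True (Suc m)"
  unfolding bounded_forall_closed_def
proof (intro allI impI)
  fix k j p :: nat and T js
  assume T: "arith True (Suc m) k T" and js: "length js = k" "\<forall>i\<in>set js. i \<le> j" and p: "p < j"
  then obtain S where S: "Pi0 m (Suc k) S" "\<forall>zs. length zs = k \<longrightarrow> (T zs \<longleftrightarrow> (\<exists>c. S (zs @ [c])))"
    by auto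
  define shift where "shift = map (\<lambda>i. if i = j then Suc j else i) js"
  define U where "U = (\<lambda>vs. \<exists>c<vs ! j. S (map ((!) (vs @ [c])) (shift @ [Suc (Suc j)])))"
  define W where "W = (\<lambda>ys. \<forall>a<ys ! p. U (map ((!) (ys @ [a])) [0..<Suc (Suc j)]))"
  have "arith True m (Suc (Suc j)) (\<lambda>vs. \<forall>c<vs ! j. \<not> S (map ((!) (vs @ [c])) (shift @ [Suc (Suc j)])))"
    by (rule bounded_forall_closedD[OF assms(1) arith_Not[OF S(1), simplified]])
      (use js in \<open>auto simp: shift_def\<close>)
  from arith_Not[OF this] have "Pi0 m (Suc (Suc j)) U"
    by (simp add: U_def)
  then have "Pi0 m (Suc j) W"
    unfolding W_def by (rule bounded_forall_closedD[OF assms(2)]) (use p in auto)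
  moreover have "(\<forall>a<xs ! p. T (map ((!) (xs @ [a])) js)) \<longleftrightarrow> (\<exists>w. W (xs @ [w]))"
    if "length xs = j" for xs
  proof -
    have "map ((!) (xs @ [w, a])) [0..<Suc (Suc j)] = xs @ [w, a]" for w a
      using map_nth[of "xs @ [w, a]"] that by simp
    then have "W (xs @ [w]) \<longleftrightarrow> (\<forall>a<xs ! p. \<exists>c<w. S (map ((!) (xs @ [a])) js @ [c]))" for w
      using map_nth_shift[OF that js(2), folded shift_def] that p by (simp add: W_def U_def nth_append)
    moreover have "(\<forall>a<xs ! p. T (map ((!) (xs @ [a])) js)) \<longleftrightarrow>
        (\<forall>a<xs ! p. \<exists>c. S (map ((!) (xs @ [a])) js @ [c]))"
      using S(2) js(1) by simp
    ultimately show ?thesis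
      using bounded_choice_nat[of "xs ! p" "\<lambda>a c. S (map ((!) (xs @ [a])) js @ [c])"]
      by presburger
  qed
  ultimately show "arith True (Suc m) j (\<lambda>xs. \<forall>a<xs ! p. T (map ((!) (xs @ [a])) js))"
    by auto
qed

lemma bounded_forall_closed: "bounded_forall_closed b m"
proof (induction m arbitrary: b)
  case 0
  show ?case by (rule bounded_forall_closed_0)
next
  case (Suc m)
  then show ?case
    by (cases b) (simp_all add: bounded_forall_closed_Pi bounded_forall_closed_Sigma)
qed

lemma arith_ball:
  assumes "arith b m k T" "length js = k" "\<forall>i\<in>set js. i \<le> j" "p < j"
  shows "arith b m j (\<lambda>xs. \<forall>a<xs ! p. T (map ((!) (xs @ [a])) js))"
  by (rule bounded_forall_closedD[OF bounded_forall_closed assms])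

lemma map_nth_append_upt: "k \<le> length xs \<Longrightarrow> map ((!) (xs @ ys)) [0..<k] = take k xs"
  by (rule nth_equalityI) (auto simp: nth_append)

lemma arith_bex:
  assumes "arith b m k T" "length js = k" "\<forall>i\<in>set js. i \<le> j" "p < j"
  shows "arith b m j (\<lambda>xs. \<exists>a<xs ! p. T (map ((!) (xs @ [a])) js))"
  using arith_Not[OF arith_ball[OF arith_Not[OF assms(1)] assms(2-4)]] by simp

lemma all_ex_iff_bounded:
  fixes R :: "nat \<Rightarrow> nat \<Rightarrow> bool"
  shows "(\<forall>a. \<exists>b. R a b) \<longleftrightarrow> (\<forall>x>0. \<exists>y>0. \<forall>a<x. \<exists>b<y. R a b)"
proof
  assume "\<forall>a. \<exists>b. R a b"
  then have "\<exists>w. \<forall>a<x. \<exists>b<w. R a b" for x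
    using bounded_choice_nat[of x R] by blast
  then show "\<forall>x>0. \<exists>y>0. \<forall>a<x. \<exists>b<y. R a b"
    by (metis less_Suc_eq zero_less_Suc)
next
  assume "\<forall>x>0. \<exists>y>0. \<forall>a<x. \<exists>b<y. R a b"
  then show "\<forall>a. \<exists>b. R a b"
    by (metis lessI zero_less_Suc)
qed

definition monotone_unfolding :: "nat \<Rightarrow> nat \<Rightarrow> (nat list \<Rightarrow> bool) \<Rightarrow> (nat list \<Rightarrow> bool) \<Rightarrow> bool" where
  "monotone_unfolding m k Q Q' \<longleftrightarrow> Pi0 m (Suc (Suc k)) Q' \<and>
     (\<forall>xs. length xs = k \<longrightarrow> (Q xs \<longleftrightarrow> (\<forall>x>0. \<exists>y>0. Q' (xs @ [x, y])))) \<and>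
     (\<forall>xs x x' y. length xs = k \<longrightarrow> x \<le> x' \<longrightarrow> Q' (xs @ [x', y]) \<longrightarrow> Q' (xs @ [x, y]))"

lemma monotone_unfolding_exists:
  assumes "Pi0 (Suc (Suc m)) k Q"
  shows "\<exists>Q'. monotone_unfolding m k Q Q'"
proof -
  obtain R where R: "Pi0 m (Suc (Suc k)) R"
    "\<forall>xs. length xs = k \<longrightarrow> (Q xs \<longleftrightarrow> (\<forall>a. \<exists>b. R (xs @ [a, b])))"
    using assms by fastforce
  define Q' where "Q' = (\<lambda>ws. \<forall>a<ws ! k. \<exists>b<ws ! Suc k. R (take k ws @ [a, b]))"
  have Q': "Q' (xs @ [x, y]) \<longleftrightarrow> (\<forall>a<x. \<exists>b<y. R (xs @ [a, b]))" if "length xs = k" for xs x y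
    using that by (simp add: Q'_def nth_append)
  define E where "E = (\<lambda>vs. \<exists>b<vs ! Suc k.
      R (map ((!) (vs @ [b])) ([0..<k] @ [Suc (Suc k), Suc (Suc (Suc k))])))"
  have "Pi0 m (Suc (Suc (Suc k))) E"
    unfolding E_def by (rule arith_bex[OF R(1)]) auto
  then have "Pi0 m (Suc (Suc k)) (\<lambda>ws. \<forall>a<ws ! k. E (map ((!) (ws @ [a])) [0..<Suc (Suc (Suc k))]))"
    by (rule arith_ball) auto
  then have "Pi0 m (Suc (Suc k)) Q'"
    by (rule arith_cong) (simp add: Q'_def E_def nth_append map_nth_append_upt)
  moreover have "Q xs \<longleftrightarrow> (\<forall>x>0. \<exists>y>0. Q' (xs @ [x, y]))" if "length xs = k" for xs
    using R(2) Q' that all_ex_iff_bounded[of "\<lambda>a b. R (xs @ [a, b])"] by simp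
  moreover have "Q' (xs @ [x, y])" if "length xs = k" "x \<le> x'" "Q' (xs @ [x', y])" for xs x x' y
    using that Q' by auto
  ultimately show ?thesis
    unfolding monotone_unfolding_def by blast
qed

primrec unfolding_chain :: "nat \<Rightarrow> nat \<Rightarrow> (nat list \<Rightarrow> bool) \<Rightarrow> nat \<Rightarrow> nat list \<Rightarrow> bool" where
  "unfolding_chain m k Q 0 = Q"
| "unfolding_chain m k Q (Suc j) =
     (SOME Q'. monotone_unfolding (m - 2 * Suc j) (k + 2 * j) (unfolding_chain m k Q j) Q')"

lemma unfolding_chain_Suc:
  assumes "Pi0 (m - 2 * j) (k + 2 * j) (unfolding_chain m k Q j)" "2 * Suc j \<le> m"
  shows "monotone_unfolding (m - 2 * Suc j) (k + 2 * j) (unfolding_chain m k Q j)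
           (unfolding_chain m k Q (Suc j))"
proof -
  have "m - 2 * j = Suc (Suc (m - 2 * Suc j))"
    using assms(2) by simp
  with assms(1) show ?thesis
    by (simp only: unfolding_chain.simps(2)) (rule someI_ex[OF monotone_unfolding_exists])
qed

lemma Pi0_unfolding_chain:
  assumes "Pi0 m k Q"
  shows "2 * j \<le> m \<Longrightarrow> Pi0 (m - 2 * j) (k + 2 * j) (unfolding_chain m k Q j)"
proof (induction j)
  case 0
  show ?case using assms by simp
next
  case (Suc j)
  then have "monotone_unfolding (m - 2 * Suc j) (k + 2 * j) (unfolding_chain m k Q j)
      (unfolding_chain m k Q (Suc j))"
    by (intro unfolding_chain_Suc) simp_all
  then show ?case
    unfolding monotone_unfolding_def by simp
qed

theorem lemma3:
  fixes n :: nat and Pn :: "nat list \<Rightarrow> bool"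
  assumes "n \<ge> 2"
    and "Pi0_pos (2 * n - 3) 1 Pn"
  shows "\<exists>P :: nat \<Rightarrow> nat list \<Rightarrow> bool.
     P n = Pn \<and>
     (\<forall>i. 2 \<le> i \<and> i < n \<longrightarrow> Pi0_pos (2 * i - 3) (1 + 2 * (n - i)) (P i)) \<and>
     (\<forall>i. 2 \<le> i \<and> i < n \<longrightarrow>
        (\<forall>xs. length xs = 1 + 2 * (n - i - 1) \<and> pos_list xs \<longrightarrow>
           (P (Suc i) xs \<longleftrightarrow> (\<forall>x>0. \<exists>y>0. P i (xs @ [x, y]))) \<and>
           (\<forall>x>0. (\<forall>y>0. \<not> P i (xs @ [x, y])) \<longrightarrow>
              (\<forall>x'\<ge>x. \<forall>y>0. \<not> P i (xs @ [x', y])))))"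
proof -
  obtain Q where Q: "Pi0 (2 * n - 3) 1 Q" "\<forall>xs. length xs = 1 \<and> pos_list xs \<longrightarrow> (Pn xs \<longleftrightarrow> Q xs)"
    using assms(2) unfolding Pi0_pos_def by blast
  define C where "C = unfolding_chain (2 * n - 3) 1 Q"
  \<comment> \<open>\<open>P n\<close> is reset to \<open>Pn\<close>, which only agrees with \<open>Q\<close> on positive arguments; this
      suffices since clause (i) only concerns positive \<open>xs\<close>.\<close>
  define P where "P = (\<lambda>i. C (n - i))(n := Pn)"
  have "monotone_unfolding (2 * i - 3) (1 + 2 * (n - Suc i)) (C (n - Suc i)) (P i)"
    if "2 \<le> i" "i < n" for i
  proof -
    have "n - i = Suc (n - Suc i)" "2 * n - 3 - 2 * Suc (n - Suc i) = 2 * i - 3"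
        "2 * Suc (n - Suc i) \<le> 2 * n - 3"
      using that by auto
    then show ?thesis
      using unfolding_chain_Suc[OF Pi0_unfolding_chain[OF Q(1)], of "n - Suc i"] that
      by (simp add: P_def C_def)
  qed
  moreover have "P (Suc i) xs = C (n - Suc i) xs"
    if "i < n" "length xs = 1 + 2 * (n - i - 1)" "pos_list xs" for i xs
    using that Q(2) by (cases "Suc i = n") (simp_all add: P_def C_def)
  moreover have "n - i = Suc (n - Suc i)" if "i < n" for i
    using that by simp
  ultimately have "Pi0 (2 * i - 3) (1 + 2 * (n - i)) (P i) \<and>
      (\<forall>xs. length xs = 1 + 2 * (n - i - 1) \<and> pos_list xs \<longrightarrow>
        (P (Suc i) xs \<longleftrightarrow> (\<forall>x>0. \<exists>y>0. P i (xs @ [x, y]))) \<and>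
        (\<forall>x x' y. x \<le> x' \<longrightarrow> P i (xs @ [x', y]) \<longrightarrow> P i (xs @ [x, y])))"
    if "2 \<le> i" "i < n" for i
    using that unfolding monotone_unfolding_def by simp
  moreover have "P n = Pn"
    by (simp add: P_def)
  ultimately show ?thesis
    unfolding Pi0_pos_def by (intro exI[of _ P]) blast
qed

end
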